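(* Let $\mathcal{D}=\mathcal{P}_{\mathcal{D}}\cup\mathcal{L}_{\mathcal{D}}$ be a minimal dominating set of the incidence graph of an arbitrary projective plane $\Pi_q$ of order $q$ with $|\mathcal{D}|<3q-1$. Suppose there is a point $P$ such that $|[P]\cap\mathcal{L}_{\mathcal{D}}|=q$, and let $\ell$ be the unique line of $[P]\setminus\mathcal{L}_{\mathcal{D}}$. Then $\mathcal{L}_{\mathcal{D}}=[P]\setminus\{\ell\}$ and $\mathcal{P}_{\mathcal{D}}$ is the set of points of $\ell$ other than $P$; hence $|\mathcal{D}|=2q$ and $\mathcal{D}$ is stable.
   Context: A dominating set $\mathcal{D}=\mathcal{P}_{\mathcal{D}}\cup\mathcal{L}_{\mathcal{D}}$ of the incidence graph of $\Pi_q$ is a set of points $\mathcal{P}_{\mathcal{D}}$ and lines $\mathcal{L}_{\mathcal{D}}$ such that every point not in $\mathcal{P}_{\mathcal{D}}$ lies on a line of $\mathcal{L}_{\mathcal{D}}$ and every line not in $\mathcal{L}_{\mathcal{D}}$ contains a point of $\mathcal{P}_{\mathcal{D}}$; minimal means no proper subset is dominating. $\mathcal{D}$ is stable if it is minimal and there is no dominating set $\mathcal{D}'\supset\mathcal{D}$ with $|\mathcal{D}'|=|\mathcal{D}|+1$ that contains a dominating set of size less than $|\mathcal{D}|$. $[P]$ is the set of lines through the point $P$. *)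

theory Defs
  imports Main
begin

definition collinear3 :: "'p set \<Rightarrow> 'l set \<Rightarrow> ('p \<Rightarrow> 'l \<Rightarrow> bool) \<Rightarrow> 'p \<Rightarrow> 'p \<Rightarrow> 'p \<Rightarrow> bool" where
  "collinear3 Pts Lns I A B C \<longleftrightarrow> (\<exists>l\<in>Lns. I A l \<and> I B l \<and> I C l)"

definition proj_plane :: "'p set \<Rightarrow> 'l set \<Rightarrow> ('p \<Rightarrow> 'l \<Rightarrow> bool) \<Rightarrow> nat \<Rightarrow> bool" where
  "proj_plane Pts Lns I q \<longleftrightarrow>
     (\<forall>A\<in>Pts. \<forall>B\<in>Pts. A \<noteq> B \<longrightarrow> (\<exists>!l. l \<in> Lns \<and> I A l \<and> I B l)) \<and>
     (\<forall>l\<in>Lns. \<forall>m\<in>Lns. l \<noteq> m \<longrightarrow> (\<exists>!A. A \<in> Pts \<and> I A l \<and> I A m)) \<and>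
     (\<exists>A\<in>Pts. \<exists>B\<in>Pts. \<exists>C\<in>Pts. \<exists>E\<in>Pts. distinct [A, B, C, E] \<and>
        \<not> collinear3 Pts Lns I A B C \<and> \<not> collinear3 Pts Lns I A B E \<and>
        \<not> collinear3 Pts Lns I A C E \<and> \<not> collinear3 Pts Lns I B C E) \<and>
     (\<forall>l\<in>Lns. finite {A\<in>Pts. I A l} \<and> card {A\<in>Pts. I A l} = q + 1)"

definition pencil :: "'l set \<Rightarrow> ('p \<Rightarrow> 'l \<Rightarrow> bool) \<Rightarrow> 'p \<Rightarrow> 'l set" where
  "pencil Lns I P = {l\<in>Lns. I P l}"

definition points_on :: "'p set \<Rightarrow> ('p \<Rightarrow> 'l \<Rightarrow> bool) \<Rightarrow> 'l \<Rightarrow> 'p set" where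
  "points_on Pts I l = {A\<in>Pts. I A l}"

text \<open>A set of vertices of the incidence graph is given as a pair (points, lines).\<close>
definition dominating :: "'p set \<Rightarrow> 'l set \<Rightarrow> ('p \<Rightarrow> 'l \<Rightarrow> bool) \<Rightarrow> 'p set \<Rightarrow> 'l set \<Rightarrow> bool" where
  "dominating Pts Lns I PD LD \<longleftrightarrow> PD \<subseteq> Pts \<and> LD \<subseteq> Lns \<and>
     (\<forall>A\<in>Pts - PD. \<exists>l\<in>LD. I A l) \<and> (\<forall>l\<in>Lns - LD. \<exists>A\<in>PD. I A l)"

definition minimal_dominating :: "'p set \<Rightarrow> 'l set \<Rightarrow> ('p \<Rightarrow> 'l \<Rightarrow> bool) \<Rightarrow> 'p set \<Rightarrow> 'l set \<Rightarrow> bool" where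
  "minimal_dominating Pts Lns I PD LD \<longleftrightarrow> dominating Pts Lns I PD LD \<and>
     (\<forall>PD' LD'. PD' \<subseteq> PD \<and> LD' \<subseteq> LD \<and> (PD', LD') \<noteq> (PD, LD) \<longrightarrow> \<not> dominating Pts Lns I PD' LD')"

definition dsize :: "'p set \<Rightarrow> 'l set \<Rightarrow> nat" where
  "dsize PD LD = card PD + card LD"

definition stable_dominating :: "'p set \<Rightarrow> 'l set \<Rightarrow> ('p \<Rightarrow> 'l \<Rightarrow> bool) \<Rightarrow> 'p set \<Rightarrow> 'l set \<Rightarrow> bool" where
  "stable_dominating Pts Lns I PD LD \<longleftrightarrow> minimal_dominating Pts Lns I PD LD \<and>
     \<not> (\<exists>PD' LD'. dominating Pts Lns I PD' LD' \<and> PD \<subseteq> PD' \<and> LD \<subseteq> LD' \<and> (PD', LD') \<noteq> (PD, LD) \<and>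
          dsize PD' LD' = dsize PD LD + 1 \<and>
          (\<exists>PD'' LD''. PD'' \<subseteq> PD' \<and> LD'' \<subseteq> LD' \<and> dominating Pts Lns I PD'' LD'' \<and>
              dsize PD'' LD'' < dsize PD LD))"

end

theory Submission imports Defs begin

text \<open>
Since [P] has q + 1 lines, LD contains every line of [P] except l. If a point y \<noteq> P of l were
not in PD, then each of the q lines through y other than l and each of the q - 1 points of l
other than P and y would need its own element of D outside [P]: such a line lies in LD or carries
a point of PD off l, and such a point lies in PD or on a line of LD through neither P nor y.
Together with the q lines of [P] this gives |D| \<ge> 3q - 1. Hence D contains the dominating set
(l - {P}) \<union> ([P] - {l}), and equals it by minimality.

For stability, let D'' \<subseteq> D \<union> {e} be dominating with |D''| < 2q. A line k \<in> [P] - {l} missing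
from D'' would force each of its q \<ge> 2 points other than P to be dominated by e alone. If
l \<notin> D'', the counting above applies to D''; if l \<in> D'', then e = l, so D'' lies inside
l \<union> [P], and a point x \<noteq> P of l missing from D'' would leave the lines through x other than l
undominated. Either way l - {P} \<subseteq> D'', so |D''| \<ge> 2q.
\<close>

lemma card_le_card_of_witnesses:
  assumes "finite S"
    and "\<forall>x\<in>K. \<exists>y\<in>S. R x y"
    and "\<And>x x' y. x \<in> K \<Longrightarrow> x' \<in> K \<Longrightarrow> y \<in> S \<Longrightarrow> R x y \<Longrightarrow> R x' y \<Longrightarrow> x = x'"
  shows "card K \<le> card S"
proof -
  obtain f where f: "\<forall>x\<in>K. f x \<in> S \<and> R x (f x)"
    using assms(2) by metis
  have "inj_on f K"
    by (rule inj_onI) (use f assms(3) in metis)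
  then show ?thesis
    using f card_inj_on_le[OF _ _ assms(1)] by blast
qed

lemma card_add_le_1_cases:
  assumes "finite A" "finite B" "card A + card B \<le> 1"
  obtains "A = {}" "\<forall>x\<in>B. \<forall>y\<in>B. x = y" | "B = {}" "\<forall>x\<in>A. \<forall>y\<in>A. x = y"
proof (cases "card A = 0")
  case True
  then show ?thesis
    using that(1) assms card_le_Suc0_iff_eq[OF assms(2)] by simp
next
  case False
  then have "card B = 0" "card A \<le> Suc 0"
    using assms(3) by linarith+
  then show ?thesis
    using that(2) assms(1,2) card_le_Suc0_iff_eq[OF assms(1)] by simp
qed

locale projective_plane =
  fixes Pts :: "'p set" and Lns :: "'l set" and I :: "'p \<Rightarrow> 'l \<Rightarrow> bool" and q :: nat
  assumes plane: "proj_plane Pts Lns I q"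
begin

lemma line_eq_if_two_common_points:
  assumes "A \<in> Pts" "B \<in> Pts" "A \<noteq> B" "k \<in> Lns" "k' \<in> Lns"
    and "I A k" "I B k" "I A k'" "I B k'"
  shows "k = k'"
proof -
  have "\<exists>!m. m \<in> Lns \<and> I A m \<and> I B m"
    using plane assms(1-3) unfolding proj_plane_def by blast
  then show ?thesis
    using assms(4-) by blast
qed

lemma join_exists:
  assumes "A \<in> Pts" "B \<in> Pts" "A \<noteq> B"
  obtains k where "k \<in> Lns" "I A k" "I B k"
  using plane assms unfolding proj_plane_def by metis

lemma meet_exists:
  assumes "k \<in> Lns" "k' \<in> Lns" "k \<noteq> k'"
  obtains A where "A \<in> Pts" "I A k" "I A k'"
  using plane assms unfolding proj_plane_def by metis

lemma quadrangle:
  obtains A B C E where "A \<in> Pts" "B \<in> Pts" "C \<in> Pts" "E \<in> Pts" "distinct [A, B, C, E]"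
    "\<not> collinear3 Pts Lns I A B C" "\<not> collinear3 Pts Lns I A C E"
  using plane unfolding proj_plane_def by metis

lemma finite_points_on: "k \<in> Lns \<Longrightarrow> finite (points_on Pts I k)"
  and card_points_on: "k \<in> Lns \<Longrightarrow> card (points_on Pts I k) = q + 1"
  using plane unfolding proj_plane_def points_on_def by blast+

lemma order_ge_1: "q \<ge> 1"
proof -
  obtain A B C E where AB: "A \<in> Pts" "B \<in> Pts" and "distinct [A, B, C, E]"
    using quadrangle .
  then have "A \<noteq> B"
    by simp
  then obtain k where k: "k \<in> Lns" "I A k" "I B k"
    using join_exists[OF AB] by blast
  have "{A, B} \<subseteq> points_on Pts I k"
    using AB k unfolding points_on_def by simp
  then have "card {A, B} \<le> q + 1"
    using card_mono[OF finite_points_on[OF k(1)]] card_points_on[OF k(1)] by metis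
  then show ?thesis
    using \<open>A \<noteq> B\<close> by simp
qed

lemma exists_line_not_through:
  assumes "P \<in> Pts"
  obtains n where "n \<in> Lns" "\<not> I P n"
proof -
  obtain A B C E where Q: "A \<in> Pts" "B \<in> Pts" "C \<in> Pts" "E \<in> Pts" "distinct [A, B, C, E]"
    "\<not> collinear3 Pts Lns I A B C" "\<not> collinear3 Pts Lns I A C E"
    by (rule quadrangle)
  obtain kAB where AB: "kAB \<in> Lns" "I A kAB" "I B kAB"
    using join_exists[of A B] Q by auto
  obtain kAC where AC: "kAC \<in> Lns" "I A kAC" "I C kAC"
    using join_exists[of A C] Q by auto
  obtain kCE where CE: "kCE \<in> Lns" "I C kCE" "I E kCE"
    using join_exists[of C E] Q by auto
  have "kAB \<noteq> kAC"
    using Q(6) AB AC unfolding collinear3_def by blast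
  then have "\<not> (I P kAB \<and> I P kAC \<and> I P kCE)"
    using line_eq_if_two_common_points[OF assms Q(1) _ AB(1) AC(1)] AB AC CE Q(7)
    unfolding collinear3_def by blast
  then show ?thesis
    using that AB AC CE by blast
qed

lemma card_pencil_eq_card_points_on:
  assumes "P \<in> Pts" "n \<in> Lns" "\<not> I P n"
  shows "card (pencil Lns I P) = card (points_on Pts I n)"
    and "finite (pencil Lns I P)"
proof -
  have "\<forall>k\<in>pencil Lns I P. \<exists>w\<in>points_on Pts I n. I w k"
    using assms meet_exists unfolding pencil_def points_on_def by (metis mem_Collect_eq)
  then obtain f where f: "\<forall>k\<in>pencil Lns I P. f k \<in> points_on Pts I n \<and> I (f k) k"
    by metis
  have f_eq: "f k = w" if "k \<in> pencil Lns I P" "w \<in> points_on Pts I n" "I w k" for k w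
    using f that assms line_eq_if_two_common_points[of "f k" w k n]
    unfolding pencil_def points_on_def by auto
  have "bij_betw f (pencil Lns I P) (points_on Pts I n)"
  proof (rule bij_betw_imageI)
    show "inj_on f (pencil Lns I P)"
    proof (rule inj_onI)
      fix k k' assume k: "k \<in> pencil Lns I P" "k' \<in> pencil Lns I P" "f k = f k'"
      have "f k \<in> Pts" "f k \<noteq> P"
        using f k(1) assms unfolding points_on_def by auto
      then show "k = k'"
        using f k assms(1) line_eq_if_two_common_points[of P "f k" k k']
        unfolding pencil_def by auto
    qed
    show "f ` pencil Lns I P = points_on Pts I n"
    proof (intro subset_antisym subsetI)
      fix w assume w: "w \<in> points_on Pts I n"
      then have "w \<in> Pts" "w \<noteq> P"
        using assms unfolding points_on_def by auto
      then obtain k where "k \<in> Lns" "I P k" "I w k"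
        using join_exists assms(1) by metis
      then show "w \<in> f ` pencil Lns I P"
        using f_eq w unfolding pencil_def by (metis (mono_tags) image_eqI mem_Collect_eq)
    qed (use f in auto)
  qed
  then show "card (pencil Lns I P) = card (points_on Pts I n)" "finite (pencil Lns I P)"
    using bij_betw_same_card bij_betw_finite finite_points_on[OF assms(2)] by blast+
qed

lemma
  assumes "P \<in> Pts"
  shows finite_pencil: "finite (pencil Lns I P)"
    and card_pencil: "card (pencil Lns I P) = q + 1"
proof -
  obtain n where "n \<in> Lns" "\<not> I P n"
    using exists_line_not_through[OF assms] .
  then show "finite (pencil Lns I P)" "card (pencil Lns I P) = q + 1"
    using card_pencil_eq_card_points_on[OF assms] card_points_on by auto
qed

lemma finite_Pts: "finite Pts"
proof -
  obtain A where A: "A \<in> Pts"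
    using quadrangle by blast
  have "Pts \<subseteq> insert A (\<Union>k\<in>pencil Lns I A. points_on Pts I k)"
  proof
    fix w assume w: "w \<in> Pts"
    show "w \<in> insert A (\<Union>k\<in>pencil Lns I A. points_on Pts I k)"
    proof (cases "w = A")
      case False
      then obtain k where "k \<in> Lns" "I A k" "I w k"
        using join_exists[OF A w] by metis
      then show ?thesis
        using w unfolding pencil_def points_on_def by blast
    qed simp
  qed
  moreover have "finite (\<Union>k\<in>pencil Lns I A. points_on Pts I k)"
    using finite_pencil[OF A] finite_points_on unfolding pencil_def by auto
  ultimately show ?thesis
    by (meson finite_insert finite_subset)
qed

lemma finite_Lns: "finite Lns"
proof -
  obtain A where "A \<in> Pts"
    using quadrangle by blast
  then obtain n where n: "n \<in> Lns"
    using exists_line_not_through by blast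
  have "Lns \<subseteq> insert n (\<Union>w\<in>points_on Pts I n. pencil Lns I w)"
  proof
    fix k assume k: "k \<in> Lns"
    show "k \<in> insert n (\<Union>w\<in>points_on Pts I n. pencil Lns I w)"
    proof (cases "k = n")
      case False
      then obtain w where "w \<in> Pts" "I w k" "I w n"
        using meet_exists[OF k n] by metis
      then show ?thesis
        using k unfolding pencil_def points_on_def by blast
    qed simp
  qed
  moreover have "finite (\<Union>w\<in>points_on Pts I n. pencil Lns I w)"
    using finite_pencil finite_points_on[OF n] unfolding points_on_def by auto
  ultimately show ?thesis
    by (meson finite_insert finite_subset)
qed

lemma card_points_on_Diff:
  "k \<in> Lns \<Longrightarrow> A \<in> points_on Pts I k \<Longrightarrow> card (points_on Pts I k - {A}) = q"
  using card_points_on finite_points_on by simp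

lemma card_pencil_Diff:
  "P \<in> Pts \<Longrightarrow> l \<in> pencil Lns I P \<Longrightarrow> card (pencil Lns I P - {l}) = q"
  using card_pencil finite_pencil by simp

lemma star_dominating:
  assumes "P \<in> Pts" "l \<in> Lns" "I P l"
  shows "dominating Pts Lns I (points_on Pts I l - {P}) (pencil Lns I P - {l})"
  unfolding dominating_def
proof (intro conjI ballI)
  fix w assume w: "w \<in> Pts - (points_on Pts I l - {P})"
  show "\<exists>k\<in>pencil Lns I P - {l}. I w k"
  proof (cases "w = P")
    case True
    have "card (pencil Lns I P - {l}) \<noteq> 0"
      using card_pencil_Diff[OF assms(1)] assms order_ge_1 unfolding pencil_def by simp
    then obtain k where "k \<in> pencil Lns I P - {l}"
      by (metis all_not_in_conv card.empty)
    then show ?thesis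
      using True unfolding pencil_def by blast
  next
    case False
    have "w \<in> Pts"
      using w by blast
    then obtain k where k: "k \<in> Lns" "I P k" "I w k"
      using join_exists[OF assms(1)] False by metis
    have "\<not> I w l"
      using w False unfolding points_on_def by blast
    then show ?thesis
      using k unfolding pencil_def by blast
  qed
next
  fix k assume k: "k \<in> Lns - (pencil Lns I P - {l})"
  show "\<exists>w\<in>points_on Pts I l - {P}. I w k"
  proof (cases "I P k")
    case True
    then have "k = l"
      using k unfolding pencil_def by blast
    have "card (points_on Pts I l - {P}) \<noteq> 0"
      using card_points_on_Diff assms order_ge_1 unfolding points_on_def by simp
    then obtain w where "w \<in> points_on Pts I l - {P}"
      by (metis all_not_in_conv card.empty)
    then show ?thesis
      using \<open>k = l\<close> unfolding points_on_def by blast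
  next
    case False
    have "k \<in> Lns" "k \<noteq> l"
      using k False assms(3) by auto
    then obtain w where "w \<in> Pts" "I w k" "I w l"
      using meet_exists[OF _ assms(2)] by metis
    then show ?thesis
      using False unfolding points_on_def by blast
  qed
qed (unfold points_on_def pencil_def, blast+)

lemma card_lines_through_le_dominating_points:
  assumes dom: "dominating Pts Lns I PD LD" and l: "l \<in> Lns"
    and y: "y \<in> points_on Pts I l" "y \<notin> PD"
  shows "card (pencil Lns I y - {l} - LD) + card (PD \<inter> points_on Pts I l) \<le> card PD"
proof -
  have PD: "PD \<subseteq> Pts" "finite PD"
    using dom finite_subset[OF _ finite_Pts] unfolding dominating_def by auto
  have "card (pencil Lns I y - {l} - LD) \<le> card (PD - points_on Pts I l)"
  proof (rule card_le_card_of_witnesses[where R = "\<lambda>k u. I u k"])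
    show "\<forall>k\<in>pencil Lns I y - {l} - LD. \<exists>u\<in>PD - points_on Pts I l. I u k"
    proof
      fix k assume k: "k \<in> pencil Lns I y - {l} - LD"
      then obtain u where u: "u \<in> PD" "I u k"
        using dom unfolding dominating_def pencil_def by blast
      have "\<not> I u l"
        using line_eq_if_two_common_points[of u y k l] u k y l PD(1) unfolding pencil_def points_on_def by blast
      then show "\<exists>u\<in>PD - points_on Pts I l. I u k"
        using u unfolding points_on_def by blast
    qed
    show "k = k'" if "k \<in> pencil Lns I y - {l} - LD" "k' \<in> pencil Lns I y - {l} - LD"
      "u \<in> PD - points_on Pts I l" "I u k" "I u k'" for k k' u
      using line_eq_if_two_common_points[of u y k k'] that y PD(1) unfolding pencil_def points_on_def by blast
  qed (use PD in simp)
  then show ?thesis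
    using card_Int_Diff[OF PD(2), of "points_on Pts I l"] by linarith
qed

lemma card_points_on_le_dominating_lines:
  assumes dom: "dominating Pts Lns I PD LD" and P: "P \<in> Pts" and l: "l \<in> Lns" "I P l"
    and lines: "pencil Lns I P - {l} \<subseteq> LD" "l \<notin> LD"
    and y: "y \<in> points_on Pts I l" "y \<noteq> P"
  shows "q + card ((pencil Lns I y - {l}) \<inter> LD) + card (points_on Pts I l - {P, y} - PD) \<le> card LD"
proof -
  have LD: "LD \<subseteq> Lns" "finite LD"
    using dom finite_subset[OF _ finite_Lns] unfolding dominating_def by auto
  have on_l: "k = l" if "k \<in> Lns" "A \<in> points_on Pts I l" "B \<in> points_on Pts I l" "A \<noteq> B"
    "I A k" "I B k" for A B k
    using line_eq_if_two_common_points[of A B k l] that l(1) unfolding points_on_def by blast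
  have "pencil Lns I P - {l} \<subseteq> LD \<inter> pencil Lns I P" "card (pencil Lns I P - {l}) = q"
    using lines(1) card_pencil_Diff[OF P] l unfolding pencil_def by auto
  then have "q \<le> card (LD \<inter> pencil Lns I P)"
    using card_mono[of "LD \<inter> pencil Lns I P"] LD(2) by (metis finite_Int)
  moreover have "(pencil Lns I y - {l}) \<inter> LD \<subseteq> (LD - pencil Lns I P) \<inter> pencil Lns I y"
    using on_l[of _ P y] P l(2) y unfolding pencil_def points_on_def by blast
  then have "card ((pencil Lns I y - {l}) \<inter> LD) \<le> card ((LD - pencil Lns I P) \<inter> pencil Lns I y)"
    using LD(2) by (intro card_mono) auto
  moreover have "card (points_on Pts I l - {P, y} - PD) \<le> card (LD - pencil Lns I P - pencil Lns I y)"
  proof (rule card_le_card_of_witnesses[where R = I])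
    show "\<forall>x\<in>points_on Pts I l - {P, y} - PD. \<exists>v\<in>LD - pencil Lns I P - pencil Lns I y. I x v"
    proof
      fix x assume x: "x \<in> points_on Pts I l - {P, y} - PD"
      then obtain v where v: "v \<in> LD" "I x v"
        using dom unfolding dominating_def points_on_def by blast
      then have "v \<notin> pencil Lns I P" "v \<notin> pencil Lns I y"
        using on_l[of v x P] on_l[of v x y] x y LD(1) P l(2) lines(2)
        unfolding pencil_def points_on_def by blast+
      then show "\<exists>v\<in>LD - pencil Lns I P - pencil Lns I y. I x v"
        using v by blast
    qed
    show "x = x'" if "x \<in> points_on Pts I l - {P, y} - PD" "x' \<in> points_on Pts I l - {P, y} - PD"
      "v \<in> LD - pencil Lns I P - pencil Lns I y" "I x v" "I x' v" for x x' v
      using on_l[of v x x'] that LD(1) lines(2) by blast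
  qed (use LD in simp)
  ultimately show ?thesis
    using card_Int_Diff[OF LD(2), of "pencil Lns I P"]
      card_Int_Diff[of "LD - pencil Lns I P" "pencil Lns I y"] LD(2) by simp
qed

lemma star_points_subset_if_small:
  assumes dom: "dominating Pts Lns I PD LD" and P: "P \<in> Pts" and l: "l \<in> Lns" "I P l"
    and lines: "pencil Lns I P - {l} \<subseteq> LD" "l \<notin> LD"
    and small: "dsize PD LD < 3 * q - 1"
  shows "points_on Pts I l - {P} \<subseteq> PD"
proof
  fix y assume y: "y \<in> points_on Pts I l - {P}"
  show "y \<in> PD"
  proof (rule ccontr)
    assume "y \<notin> PD"
    let ?K = "pencil Lns I y - {l}" and ?X = "points_on Pts I l - {P, y}"
    have "y \<in> Pts" "l \<in> pencil Lns I y" "{P, y} \<subseteq> points_on Pts I l"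
      using y P l unfolding points_on_def pencil_def by auto
    then have "card ?K = q" "card ?X = q - 1"
      using card_pencil_Diff card_Diff_subset[of "{P, y}"] finite_points_on[OF l(1)]
        card_points_on[OF l(1)] y by auto
    moreover have "card ?K = card (?K \<inter> LD) + card (?K - LD)"
      using card_Int_Diff finite_pencil \<open>y \<in> Pts\<close> by blast
    moreover have "card ?X = card (?X \<inter> PD) + card (?X - PD)"
      using card_Int_Diff finite_points_on l(1) by blast
    moreover have "card (?X \<inter> PD) \<le> card (PD \<inter> points_on Pts I l)"
      using finite_subset[OF _ finite_Pts] dom unfolding dominating_def by (intro card_mono) auto
    moreover note card_lines_through_le_dominating_points[OF dom l(1)]
      card_points_on_le_dominating_lines[OF dom P l lines]
    ultimately have "3 * q - 1 \<le> dsize PD LD"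
      using y \<open>y \<notin> PD\<close> unfolding dsize_def by fastforce
    then show False
      using small by simp
  qed
qed

lemma star_points_subset_if_dominating_within_star:
  assumes dom: "dominating Pts Lns I PD LD" and P: "P \<in> Pts" and l: "l \<in> Lns" "I P l"
    and within: "PD \<subseteq> points_on Pts I l" "LD \<subseteq> pencil Lns I P"
  shows "points_on Pts I l - {P} \<subseteq> PD"
proof
  fix x assume x: "x \<in> points_on Pts I l - {P}"
  then have x': "x \<in> Pts" "I x l" "x \<noteq> P" "l \<in> pencil Lns I x"
    using l unfolding points_on_def pencil_def by auto
  show "x \<in> PD"
  proof (rule ccontr)
    assume "x \<notin> PD"
    have "card (pencil Lns I x - {l}) \<noteq> 0"
      using card_pencil_Diff[OF x'(1,4)] order_ge_1 by simp
    then obtain h where "h \<in> pencil Lns I x - {l}"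
      by (metis all_not_in_conv card.empty)
    then have h: "h \<in> Lns" "I x h" "h \<noteq> l"
      unfolding pencil_def by auto
    then have "\<not> I P h"
      using line_eq_if_two_common_points[of x P h l] x' P l by blast
    then obtain w where w: "w \<in> PD" "I w h"
      using dom within(2) h(1) unfolding dominating_def pencil_def by blast
    then have "w \<in> Pts" "I w l" "w \<noteq> x"
      using within(1) \<open>x \<notin> PD\<close> unfolding points_on_def by auto
    then show False
      using line_eq_if_two_common_points[of x w h l] x' h l(1) w(2) by blast
  qed
qed

lemma point_on_pencil_line_dominated_off_star:
  assumes dom: "dominating Pts Lns I PD LD" and P: "P \<in> Pts" and l: "l \<in> Lns" "I P l"
    and k: "k \<in> pencil Lns I P - {l}" "k \<notin> LD" and u: "u \<in> points_on Pts I k - {P}"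
  shows "u \<in> PD - (points_on Pts I l - {P}) \<or> (\<exists>v\<in>LD - (pencil Lns I P - {l}). I u v \<and> v \<noteq> k)"
proof (cases "u \<in> PD")
  case True
  have "\<not> I u l"
    using line_eq_if_two_common_points[of P u k l] u P k l unfolding pencil_def points_on_def by auto
  then show ?thesis
    using True unfolding points_on_def by blast
next
  case False
  then obtain v where v: "v \<in> LD" "I u v" "v \<in> Lns"
    using dom u unfolding dominating_def points_on_def by blast
  then have "v \<noteq> k" "\<not> I P v"
    using line_eq_if_two_common_points[of P u k v] u P k unfolding pencil_def points_on_def by auto
  then show ?thesis
    using v unfolding pencil_def by blast
qed

lemma pencil_lines_subset_if_dominating_in_extension:
  assumes P: "P \<in> Pts" and l: "l \<in> Lns" "I P l" and q: "2 \<le> q"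
    and ext: "finite PD'" "finite LD'"
      "card (PD' - (points_on Pts I l - {P})) + card (LD' - (pencil Lns I P - {l})) \<le> 1"
    and sub: "PD'' \<subseteq> PD'" "LD'' \<subseteq> LD'" and dom: "dominating Pts Lns I PD'' LD''"
  shows "pencil Lns I P - {l} \<subseteq> LD''"
proof
  let ?X = "points_on Pts I l - {P}" and ?A = "pencil Lns I P - {l}"
  fix k assume "k \<in> ?A"
  then have k: "k \<in> ?A" "k \<in> Lns" "I P k"
    unfolding pencil_def by auto
  show "k \<in> LD''"
  proof (rule ccontr)
    assume "k \<notin> LD''"
    note new_element = point_on_pencil_line_dominated_off_star[OF dom P l k(1) this]
    have "card (points_on Pts I k - {P}) = q"
      using card_points_on_Diff[OF k(2)] P k(3) unfolding points_on_def by simp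
    then obtain u1 u2 where u: "u1 \<in> points_on Pts I k - {P}" "u2 \<in> points_on Pts I k - {P}" "u1 \<noteq> u2"
      using q card_le_Suc0_iff_eq[of "points_on Pts I k - {P}"] finite_points_on[OF k(2)] by auto
    show False
    proof (rule card_add_le_1_cases[OF finite_Diff[OF ext(1)] finite_Diff[OF ext(2)] ext(3)])
      assume "PD' - ?X = {}" and new_lines: "\<forall>x\<in>LD' - ?A. \<forall>y\<in>LD' - ?A. x = y"
      then have "PD'' - ?X = {}"
        using sub(1) by blast
      then obtain v1 v2 where v: "v1 \<in> LD'' - ?A" "v2 \<in> LD'' - ?A" "I u1 v1" "I u2 v2" "v1 \<noteq> k"
        using new_element[OF u(1)] new_element[OF u(2)] by blast
      moreover have "v1 \<in> Lns"
        using v(1) dom unfolding dominating_def by blast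
      moreover have "v1 = v2"
        using v(1,2) new_lines sub(2) by blast
      ultimately show False
        using line_eq_if_two_common_points[of u1 u2 v1 k] u k(2) unfolding points_on_def by auto
    next
      assume "LD' - ?A = {}" and new_points: "\<forall>x\<in>PD' - ?X. \<forall>y\<in>PD' - ?X. x = y"
      then have "LD'' - ?A = {}"
        using sub(2) by blast
      then show False
        using new_element u sub(1) new_points by blast
    qed
  qed
qed

lemma dsize_ge_if_dominating_in_extension:
  assumes P: "P \<in> Pts" and l: "l \<in> Lns" "I P l" and q: "2 \<le> q"
    and ext: "finite PD'" "finite LD'"
      "card (PD' - (points_on Pts I l - {P})) + card (LD' - (pencil Lns I P - {l})) \<le> 1"
    and sub: "PD'' \<subseteq> PD'" "LD'' \<subseteq> LD'" and dom: "dominating Pts Lns I PD'' LD''"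
  shows "2 * q \<le> dsize PD'' LD''"
proof (rule ccontr)
  let ?X = "points_on Pts I l - {P}" and ?A = "pencil Lns I P - {l}"
  assume "\<not> 2 * q \<le> dsize PD'' LD''"
  then have small: "dsize PD'' LD'' < 2 * q"
    by simp
  have A: "?A \<subseteq> LD''"
    using pencil_lines_subset_if_dominating_in_extension[OF P l q ext sub dom] .
  have "?X \<subseteq> PD''"
  proof (cases "l \<in> LD''")
    case False
    have "dsize PD'' LD'' < 3 * q - 1"
      using small q by simp
    then show ?thesis
      using star_points_subset_if_small[OF dom P l A False] by blast
  next
    case True
    then have "l \<in> LD' - ?A"
      using sub(2) by blast
    have "PD' - ?X = {} \<and> LD' - ?A \<subseteq> {l}"
      by (rule card_add_le_1_cases[OF finite_Diff[OF ext(1)] finite_Diff[OF ext(2)] ext(3)])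
        (use \<open>l \<in> LD' - ?A\<close> in blast)+
    then have "PD'' \<subseteq> points_on Pts I l" "LD'' \<subseteq> pencil Lns I P"
      using sub l unfolding pencil_def by auto
    then show ?thesis
      using star_points_subset_if_dominating_within_star[OF dom P l] by blast
  qed
  moreover have "card ?X = q" "card ?A = q"
    using card_points_on_Diff[OF l(1)] card_pencil_Diff[OF P] P l
    unfolding pencil_def points_on_def by auto
  ultimately have "q \<le> card PD''" "q \<le> card LD''"
    using card_mono[OF finite_subset[OF sub(1) ext(1)]] card_mono[OF finite_subset[OF sub(2) ext(2)] A]
    by metis+
  then show False
    using small unfolding dsize_def by linarith
qed

lemma star_stable_if_minimal:
  assumes P: "P \<in> Pts" and l: "l \<in> Lns" "I P l" and q: "2 \<le> q"
    and min: "minimal_dominating Pts Lns I (points_on Pts I l - {P}) (pencil Lns I P - {l})"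
  shows "stable_dominating Pts Lns I (points_on Pts I l - {P}) (pencil Lns I P - {l})"
  unfolding stable_dominating_def
proof (intro conjI notI)
  let ?X = "points_on Pts I l - {P}" and ?A = "pencil Lns I P - {l}"
  assume "\<exists>PD' LD'. dominating Pts Lns I PD' LD' \<and> ?X \<subseteq> PD' \<and> ?A \<subseteq> LD' \<and> (PD', LD') \<noteq> (?X, ?A) \<and>
    dsize PD' LD' = dsize ?X ?A + 1 \<and>
    (\<exists>PD'' LD''. PD'' \<subseteq> PD' \<and> LD'' \<subseteq> LD' \<and> dominating Pts Lns I PD'' LD'' \<and> dsize PD'' LD'' < dsize ?X ?A)"
  then obtain PD' LD' PD'' LD'' where
    D': "dominating Pts Lns I PD' LD'" "?X \<subseteq> PD'" "?A \<subseteq> LD'" "dsize PD' LD' = dsize ?X ?A + 1"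
    and D'': "PD'' \<subseteq> PD'" "LD'' \<subseteq> LD'" "dominating Pts Lns I PD'' LD''" "dsize PD'' LD'' < dsize ?X ?A"
    by blast
  have fin: "finite PD'" "finite LD'"
    using D'(1) finite_subset finite_Pts finite_Lns unfolding dominating_def by blast+
  have "l \<in> pencil Lns I P" "P \<in> points_on Pts I l"
    using P l unfolding pencil_def points_on_def by auto
  then have card_X: "card ?X = q" and card_A: "card ?A = q"
    using card_points_on_Diff[OF l(1)] card_pencil_Diff[OF P] by auto
  have "card (PD' - ?X) + card (LD' - ?A) \<le> 1"
    using D'(4) card_Diff_subset[OF finite_subset[OF D'(2) fin(1)] D'(2)]
      card_Diff_subset[OF finite_subset[OF D'(3) fin(2)] D'(3)]
      card_mono[OF fin(1) D'(2)] card_mono[OF fin(2) D'(3)]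
    unfolding dsize_def card_X card_A by linarith
  then have "2 * q \<le> dsize PD'' LD''"
    using dsize_ge_if_dominating_in_extension[OF P l q fin _ D''(1-3)] by blast
  then show False
    using D''(4) unfolding dsize_def card_X card_A by linarith
qed (rule min)

end

theorem lemma1:
  fixes Pts :: "'p set" and Lns :: "'l set" and I :: "'p \<Rightarrow> 'l \<Rightarrow> bool" and q :: nat
    and PD :: "'p set" and LD :: "'l set" and P :: 'p and l :: 'l
  assumes plane: "proj_plane Pts Lns I q"
    and mindom: "minimal_dominating Pts Lns I PD LD"
    and small: "dsize PD LD < 3 * q - 1"
    and P: "P \<in> Pts"
    and cardP: "card (pencil Lns I P \<inter> LD) = q"
    and l: "l \<in> pencil Lns I P - LD"
  shows "LD = pencil Lns I P - {l} \<and> PD = points_on Pts I l - {P} \<and>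
         dsize PD LD = 2 * q \<and> stable_dominating Pts Lns I PD LD"
proof -
  interpret projective_plane Pts Lns I q
    using plane by unfold_locales
  have dom: "dominating Pts Lns I PD LD"
    using mindom unfolding minimal_dominating_def by blast
  have l': "l \<in> Lns" "I P l" "l \<notin> LD" "P \<in> points_on Pts I l"
    using l P unfolding pencil_def points_on_def by auto
  have "pencil Lns I P \<inter> LD \<subseteq> pencil Lns I P - {l}" "card (pencil Lns I P - {l}) = q"
    using l l' card_pencil_Diff[OF P] by auto
  then have lines: "pencil Lns I P - {l} \<subseteq> LD"
    using card_subset_eq[of "pencil Lns I P - {l}"] finite_pencil[OF P] cardP by (metis finite_Diff le_infE)
  moreover have "points_on Pts I l - {P} \<subseteq> PD"
    using star_points_subset_if_small[OF dom P l'(1,2) lines l'(3) small] .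
  ultimately have eq: "LD = pencil Lns I P - {l} \<and> PD = points_on Pts I l - {P}"
    using mindom star_dominating[OF P l'(1,2)] unfolding minimal_dominating_def by blast
  have size: "dsize PD LD = 2 * q"
    using eq card_points_on_Diff[OF l'(1,4)] card_pencil_Diff[OF P] l unfolding dsize_def by simp
  then have "stable_dominating Pts Lns I PD LD"
    using star_stable_if_minimal[OF P l'(1,2)] mindom eq small by simp
  with eq size show ?thesis
    by blast
qed

end
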